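(* Let $1<\gamma\le 15/14$. Let $\mathrm{ALG}$ be a deterministic online list update algorithm with advice such that $\mathrm{ALG}(\sigma)\le\gamma\cdot\mathrm{OPT}(\sigma)$ for every request sequence $\sigma$ (full cost model). Then on inputs of size $n$ (already for a list of two items), $\mathrm{ALG}$ needs to read at least $$\frac{n}{5}\Bigl(1+(7\gamma-7)\log_2(7\gamma-7)+(8-7\gamma)\log_2(8-7\gamma)\Bigr)$$ bits of advice on some input.
   Context: Static list update problem: a list of $l$ distinct items in some initial order; a request sequence $\sigma$ of items is served online in order. Serving a request to the item at position $i$ (from the front) costs $i$ (full cost model). Immediately after an access, the accessed item may be moved closer to the front at no cost (free exchange); at any time two adjacent items may be swapped at cost $1$ (paid exchange). $A(\sigma)$ is the total cost of algorithm $A$ on $\sigma$ and $\mathrm{OPT}(\sigma)$ the minimum cost of any offline algorithm on $\sigma$ from the same initial list. Advice model: before serving, an oracle knowing all of $\sigma$ writes an infinite binary advice tape; the online algorithm may read tape bits at any time, and the number of advice bits read is the length of the shortest prefix of the tape containing all accessed bits. *)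

theory Defs
  imports Complex_Main
begin

(* Static list update, full cost model. Positions are 0-indexed internally;
   accessing the item at 0-indexed position i costs i+1. *)

fun index_of :: "'a \<Rightarrow> 'a list \<Rightarrow> nat" where
  "index_of x [] = 0"
| "index_of x (y # ys) = (if x = y then 0 else Suc (index_of x ys))"

(* Paid exchange: swap the items at positions j and j+1 (no-op if out of range,
   but it is still charged cost 1). *)
definition swap_adj :: "nat \<Rightarrow> 'a list \<Rightarrow> 'a list" where
  "swap_adj j xs = (if Suc j < length xs then xs[j := xs ! Suc j, Suc j := xs ! j] else xs)"

(* Free exchange: move the accessed item x to position min k (its current position),
   i.e. only closer to the front. *)
definition move_to :: "nat \<Rightarrow> 'a \<Rightarrow> 'a list \<Rightarrow> 'a list" where
  "move_to k x xs = (let k' = min k (index_of x xs); ys = remove1 x xs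
                     in take k' ys @ x # drop k' ys)"

(* A policy maps the requests seen so far (including the current one) to an action:
   a list of paid exchanges performed before the access, and the target position of
   the free exchange performed right after the access.
   run P h rs L = total cost of serving the remaining requests rs from list L,
   where h is the history of already served requests. *)
fun run :: "('a list \<Rightarrow> nat list \<times> nat) \<Rightarrow> 'a list \<Rightarrow> 'a list \<Rightarrow> 'a list \<Rightarrow> nat" where
  "run P h [] L = 0"
| "run P h (x # rs) L =
     (let (sw, k) = P (h @ [x]);
          L1 = fold swap_adj sw L;
          c = length sw + index_of x L1 + 1;
          L2 = move_to k x L1
      in c + run P (h @ [x]) rs L2)"

definition alg_cost :: "((nat \<Rightarrow> bool) \<Rightarrow> 'a list \<Rightarrow> nat list \<times> nat) \<Rightarrow> (nat \<Rightarrow> bool)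
    \<Rightarrow> 'a list \<Rightarrow> 'a list \<Rightarrow> nat" where
  "alg_cost A \<phi> L \<sigma> = run (A \<phi>) [] \<sigma> L"

definition OPT :: "'a list \<Rightarrow> 'a list \<Rightarrow> nat" where
  "OPT L \<sigma> = (LEAST c. \<exists>P. run P [] \<sigma> L = c)"

(* The first b advice bits determine the behaviour of A on \<sigma>: every tape agreeing
   with \<phi> on bits 0..b-1 yields exactly the same actions on every prefix of \<sigma>.
   Any b such that all accessed bits lie in the first b bits has this property. *)
definition advice_determines :: "((nat \<Rightarrow> bool) \<Rightarrow> 'a list \<Rightarrow> nat list \<times> nat)
    \<Rightarrow> (nat \<Rightarrow> bool) \<Rightarrow> 'a list \<Rightarrow> nat \<Rightarrow> bool" where
  "advice_determines A \<phi> \<sigma> b \<longleftrightarrow>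
     (\<forall>\<psi>. (\<forall>i<b. \<psi> i = \<phi> i) \<longrightarrow>
        (\<forall>i<length \<sigma>. A \<psi> (take (Suc i) \<sigma>) = A \<phi> (take (Suc i) \<sigma>)))"

end

theory Submission
  imports Defs
begin

text \<open>On the list \<open>[a, b]\<close>, let a bit \<open>\<beta>\<close> select the block \<open>a b b b a\<close> (if \<open>\<beta>\<close>) or
  \<open>a b a a b\<close>. Offline, each block costs 7. Online, it costs at least 7, and at least 8 unless
  \<open>b\<close> is in front after the first two requests exactly when \<open>\<beta>\<close>. Given its advice, the algorithm
  is deterministic, so the sequence of these guess errors determines the bits. A
  \<open>\<gamma>\<close>-competitive algorithm makes at most \<open>x m\<close> errors on \<open>m\<close> blocks, where \<open>x = 7\<gamma> - 7 \<le> 1/2\<close>.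
  So, with \<open>H\<close> the binary entropy, each advice string of length \<open>B\<close> serves at most
  \<open>\<Sum>j\<le>x m. (m choose j) \<le> 2 ^ (H(x) m)\<close> of the \<open>2 ^ m\<close> bit strings, which forces
  \<open>B \<ge> m (1 - H(x))\<close>.\<close>

lemma swap_adj_pair: "swap_adj j [x, y] = (if j = 0 then [y, x] else [x, y])"
  by (auto simp: swap_adj_def)

lemma fold_swap_adj_pair: "fold swap_adj sw [x, y] \<in> {[x, y], [y, x]}"
  by (induction sw arbitrary: x y) (auto simp: swap_adj_pair)

lemma move_to_Cons_self: "move_to k x (x # ys) = x # ys"
  by (simp add: move_to_def)

lemma move_to_pair: "x \<noteq> y \<Longrightarrow> move_to k y [x, y] = (if k = 0 then [y, x] else [x, y])"
  by (simp add: move_to_def)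

fun final_list :: "('a list \<Rightarrow> nat list \<times> nat) \<Rightarrow> 'a list \<Rightarrow> 'a list \<Rightarrow> 'a list \<Rightarrow> 'a list" where
  "final_list P h [] L = L"
| "final_list P h (x # rs) L =
     (let (sw, k) = P (h @ [x]) in final_list P (h @ [x]) rs (move_to k x (fold swap_adj sw L)))"

lemma run_append:
  "run P h (xs @ ys) L = run P h xs L + run P (h @ xs) ys (final_list P h xs L)"
  by (induction xs arbitrary: h L) (auto simp: Let_def split: prod.splits)

lemma final_list_append:
  "final_list P h (xs @ ys) L = final_list P (h @ xs) ys (final_list P h xs L)"
  by (induction xs arbitrary: h L) (auto split: prod.splits)

lemma run_cong:
  assumes "\<forall>i<length rs. P (h @ take (Suc i) rs) = Q (h @ take (Suc i) rs)"
  shows "run P h rs L = run Q h rs L"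
  using assms
proof (induction rs arbitrary: h L)
  case Nil
  then show ?case by simp
next
  case (Cons x rs)
  have "P (h @ [x]) = Q (h @ [x])"
    using Cons.prems[rule_format, of 0] by simp
  moreover have "\<forall>i<length rs. P ((h @ [x]) @ take (Suc i) rs) = Q ((h @ [x]) @ take (Suc i) rs)"
    using Cons.prems[rule_format, of "Suc _"] by simp
  ultimately show ?case
    using Cons.IH by (simp split: prod.splits)
qed

text \<open>A request to the front item costs 1, or 3 if the list changes (a paid exchange is then
  needed before the access); a request to the back item costs at least 2.\<close>
definition pair_step_cost :: "'a list \<Rightarrow> 'a \<Rightarrow> 'a list \<Rightarrow> nat" where
  "pair_step_cost L r L' = (if hd L = r then if L' = L then 1 else 3 else 2)"

lemma run_single_pair:
  assumes "a \<noteq> b" "L \<in> {[a, b], [b, a]}" "r \<in> {a, b}"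
  shows "final_list P h [r] L \<in> {[a, b], [b, a]}"
    and "pair_step_cost L r (final_list P h [r] L) \<le> run P h [r] L"
proof -
  obtain sw k where P: "P (h @ [r]) = (sw, k)" by fastforce
  define L1 where "L1 = fold swap_adj sw L"
  have L1: "L1 \<in> {[a, b], [b, a]}"
    using assms(2) fold_swap_adj_pair unfolding L1_def by fastforce
  have paid: "L1 \<noteq> L \<Longrightarrow> 1 \<le> length sw"
    unfolding L1_def by (cases sw) auto
  have final: "final_list P h [r] L = move_to k r L1" and cost: "run P h [r] L = length sw + index_of r L1 + 1"
    by (simp_all add: P L1_def)
  show "final_list P h [r] L \<in> {[a, b], [b, a]}"
    using L1 assms(1,3) unfolding final by (auto simp: move_to_Cons_self move_to_pair split: if_splits)
  show "pair_step_cost L r (final_list P h [r] L) \<le> run P h [r] L"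
    using L1 assms paid unfolding final cost pair_step_cost_def
    by (auto simp: move_to_Cons_self move_to_pair)
qed

declare run.simps(2) [simp del] final_list.simps(2) [simp del]

lemma run_Cons_Cons:
  "run P h (r # r' # rs) L = run P h [r] L + run P (h @ [r]) (r' # rs) (final_list P h [r] L)"
  using run_append[of P h "[r]" "r' # rs" L] by simp

lemma final_list_pair:
  assumes "a \<noteq> b" "L \<in> {[a, b], [b, a]}" "set rs \<subseteq> {a, b}"
  shows "final_list P h rs L \<in> {[a, b], [b, a]}"
  using assms(2,3)
proof (induction rs arbitrary: h L)
  case Nil
  then show ?case by simp
next
  case (Cons r rs)
  have "final_list P h [r] L \<in> {[a, b], [b, a]}"
    using Cons.prems run_single_pair(1)[OF assms(1)] by simp
  then show ?case
    using Cons.IH Cons.prems final_list_append[of P h "[r]" rs L] by simp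
qed

lemma run_two_distinct_pair_ge:
  assumes "a \<noteq> b" "L \<in> {[a, b], [b, a]}"
  shows "3 \<le> run P h [a, b] L"
proof -
  define L1 where "L1 = final_list P h [a] L"
  have L1: "L1 \<in> {[a, b], [b, a]}" "pair_step_cost L a L1 \<le> run P h [a] L"
    using run_single_pair[OF assms] unfolding L1_def by auto
  have "pair_step_cost L1 b (final_list P (h @ [a]) [b] L1) \<le> run P (h @ [a]) [b] L1"
    by (rule run_single_pair(2)[OF assms(1) L1(1)]) simp
  then show ?thesis
    using L1 assms unfolding run_Cons_Cons L1_def[symmetric]
    by (auto simp: pair_step_cost_def split: if_splits)
qed

lemma run_repeat_then_other_ge:
  assumes "a \<noteq> b" "L \<in> {[a, b], [b, a]}"
  shows "(if hd L = a then 4 else 5) \<le> run P h [a, a, b] L"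
proof -
  define L1 where "L1 = final_list P h [a] L"
  define L2 where "L2 = final_list P (h @ [a]) [a] L1"
  have L1: "L1 \<in> {[a, b], [b, a]}" "pair_step_cost L a L1 \<le> run P h [a] L"
    using run_single_pair[OF assms] unfolding L1_def by auto
  have L2: "L2 \<in> {[a, b], [b, a]}" "pair_step_cost L1 a L2 \<le> run P (h @ [a]) [a] L1"
    unfolding L2_def by (rule run_single_pair[OF assms(1) L1(1)]; simp)+
  have "pair_step_cost L2 b (final_list P (h @ [a, a]) [b] L2) \<le> run P (h @ [a, a]) [b] L2"
    by (rule run_single_pair(2)[OF assms(1) L2(1)]) simp
  then show ?thesis
    using L1 L2 assms unfolding run_Cons_Cons L1_def[symmetric] L2_def[symmetric]
    by (auto simp: pair_step_cost_def split: if_splits)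
qed

definition block :: "'a \<Rightarrow> 'a \<Rightarrow> bool \<Rightarrow> 'a list" where
  "block a b \<beta> = (if \<beta> then [a, b, b, b, a] else [a, b, a, a, b])"

definition block_seq :: "'a \<Rightarrow> 'a \<Rightarrow> bool list \<Rightarrow> 'a list" where
  "block_seq a b bs = concat (map (block a b) bs)"

lemma block_seq_Cons: "block_seq a b (\<beta> # bs) = block a b \<beta> @ block_seq a b bs"
  by (simp add: block_seq_def)

lemma length_block_seq: "length (block_seq a b bs) = 5 * length bs"
  by (induction bs) (auto simp: block_seq_def block_def)

lemma set_block_seq: "set (block_seq a b bs) \<subseteq> {a, b}"
  by (auto simp: block_seq_def block_def split: if_splits)

text \<open>Entry \<open>i\<close> is set iff, after the first two requests of block \<open>i\<close>, the policy does not have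
  in front the item that the block requests twice next.\<close>
fun guess_errors ::
  "'a \<Rightarrow> 'a \<Rightarrow> ('a list \<Rightarrow> nat list \<times> nat) \<Rightarrow> 'a list \<Rightarrow> 'a list \<Rightarrow> bool list \<Rightarrow> bool list" where
  "guess_errors a b P h L [] = []"
| "guess_errors a b P h L (\<beta> # bs) =
     ((hd (final_list P h [a, b] L) = b) \<noteq> \<beta>) #
     guess_errors a b P (h @ block a b \<beta>) (final_list P h (block a b \<beta>) L) bs"

lemma length_guess_errors: "length (guess_errors a b P h L bs) = length bs"
  by (induction bs arbitrary: h L) auto

lemma guess_errors_eq_imp_eq:
  assumes "guess_errors a b P h L bs = guess_errors a b P h L cs" "length bs = length cs"
  shows "bs = cs"
  using assms
proof (induction bs arbitrary: cs h L)
  case Nil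
  then show ?case by simp
next
  case (Cons \<beta> bs)
  then obtain \<beta>' cs' where cs: "cs = \<beta>' # cs'"
    by (cases cs) auto
  with Cons.prems have "\<beta> = \<beta>'"
    by auto
  with Cons.prems Cons.IH show ?case
    unfolding cs by auto
qed

lemma run_block_ge:
  assumes "a \<noteq> b" "L \<in> {[a, b], [b, a]}"
  shows "7 + (if (hd (final_list P h [a, b] L) = b) \<noteq> \<beta> then 1 else 0) \<le> run P h (block a b \<beta>) L"
proof -
  define L2 where "L2 = final_list P h [a, b] L"
  have L2: "L2 \<in> {[a, b], [b, a]}"
    unfolding L2_def by (rule final_list_pair[OF assms]) simp
  have first_two: "3 \<le> run P h [a, b] L"
    by (rule run_two_distinct_pair_ge[OF assms])
  show ?thesis
  proof (cases \<beta>)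
    case True
    have "(if hd L2 = b then 4 else 5) \<le> run P (h @ [a, b]) [b, b, a] L2"
      using run_repeat_then_other_ge[of b a L2] assms(1) L2 by auto
    then show ?thesis
      using True first_two run_append[of P h "[a, b]" "[b, b, a]" L]
      by (simp add: block_def L2_def split: if_splits)
  next
    case False
    have "(if hd L2 = a then 4 else 5) \<le> run P (h @ [a, b]) [a, a, b] L2"
      using run_repeat_then_other_ge[of a b L2] assms(1) L2 by auto
    moreover have "hd L2 = a \<longleftrightarrow> hd L2 \<noteq> b"
      using L2 assms(1) by auto
    ultimately show ?thesis
      using False first_two run_append[of P h "[a, b]" "[a, a, b]" L]
      by (simp add: block_def L2_def split: if_splits)
  qed
qed

lemma run_block_seq_ge:
  assumes "a \<noteq> b" "L \<in> {[a, b], [b, a]}"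
  shows "7 * length bs + length (filter id (guess_errors a b P h L bs)) \<le> run P h (block_seq a b bs) L"
  using assms(2)
proof (induction bs arbitrary: h L)
  case Nil
  then show ?case by simp
next
  case (Cons \<beta> bs)
  let ?h' = "h @ block a b \<beta>" and ?L' = "final_list P h (block a b \<beta>) L"
  have "?L' \<in> {[a, b], [b, a]}"
    using final_list_pair[OF assms(1) Cons.prems] by (simp add: block_def)
  then have "7 * length bs + length (filter id (guess_errors a b P ?h' ?L' bs)) \<le> run P ?h' (block_seq a b bs) ?L'"
    by (rule Cons.IH)
  then show ?case
    using run_block_ge[OF assms(1) Cons.prems, of P h \<beta>]
    by (simp add: block_seq_Cons run_append id_def split: if_splits)
qed

lemma run_block_offline:
  assumes "a \<noteq> b" and P: "\<forall>i<5. P (h @ take (Suc i) (block a b \<beta>)) = ([], if \<beta> then 0 else 1)"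
  shows "run P h (block a b \<beta>) [a, b] = 7 \<and> final_list P h (block a b \<beta>) [a, b] = [a, b]"
  using assms(1) P[rule_format, of 0] P[rule_format, of 1] P[rule_format, of 2]
    P[rule_format, of 3] P[rule_format, of 4]
  by (cases \<beta>) (simp_all add: block_def run.simps final_list.simps move_to_Cons_self move_to_pair)

lemma run_block_seq_offline:
  assumes "a \<noteq> b"
    and "\<forall>i<5 * length bs. P (h @ take (Suc i) (block_seq a b bs)) = ([], if bs ! (i div 5) then 0 else 1)"
  shows "run P h (block_seq a b bs) [a, b] = 7 * length bs"
  using assms(2)
proof (induction bs arbitrary: h)
  case Nil
  then show ?case by (simp add: block_seq_def)
next
  case (Cons \<beta> bs)
  have length_block: "length (block a b \<beta>) = 5"
    by (simp add: block_def)
  have "\<forall>i<5. P (h @ take (Suc i) (block a b \<beta>)) = ([], if \<beta> then 0 else 1)"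
  proof (intro allI impI)
    fix i :: nat
    assume "i < 5"
    then show "P (h @ take (Suc i) (block a b \<beta>)) = ([], if \<beta> then 0 else 1)"
      using Cons.prems[rule_format, of i] length_block by (simp add: block_seq_Cons)
  qed
  then have block: "run P h (block a b \<beta>) [a, b] = 7 \<and> final_list P h (block a b \<beta>) [a, b] = [a, b]"
    by (rule run_block_offline[OF assms(1)])
  have "\<forall>i<5 * length bs. P ((h @ block a b \<beta>) @ take (Suc i) (block_seq a b bs)) = ([], if bs ! (i div 5) then 0 else 1)"
  proof (intro allI impI)
    fix i
    assume "i < 5 * length bs"
    then show "P ((h @ block a b \<beta>) @ take (Suc i) (block_seq a b bs)) = ([], if bs ! (i div 5) then 0 else 1)"
      using Cons.prems[rule_format, of "i + 5"] length_block by (simp add: block_seq_Cons)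
  qed
  then have "run P (h @ block a b \<beta>) (block_seq a b bs) [a, b] = 7 * length bs"
    by (rule Cons.IH)
  then show ?case
    using block by (simp add: block_seq_Cons run_append)
qed

lemma OPT_block_seq_le:
  assumes "a \<noteq> b"
  shows "OPT [a, b] (block_seq a b bs) \<le> 7 * length bs"
proof -
  define P :: "'a list \<Rightarrow> nat list \<times> nat"
    where "P h = ([], if bs ! ((length h - 1) div 5) then 0 else 1)" for h
  have "run P [] (block_seq a b bs) [a, b] = 7 * length bs"
    by (rule run_block_seq_offline[OF assms]) (simp add: P_def length_block_seq)
  then show ?thesis
    unfolding OPT_def by (metis (mono_tags) Least_le)
qed

lemma card_bool_lists_few_true:
  "card {e :: bool list. length e = m \<and> length (filter id e) \<le> k} \<le> (\<Sum>j\<le>k. m choose j)"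
proof -
  let ?E = "{e :: bool list. length e = m \<and> length (filter id e) \<le> k}"
  define support where "support e = {i. i < m \<and> e ! i}" for e :: "bool list"
  have "inj_on support ?E"
  proof (rule inj_onI)
    fix e e'
    assume "e \<in> ?E" "e' \<in> ?E" "support e = support e'"
    then show "e = e'"
      unfolding support_def by (intro nth_equalityI) (auto simp: set_eq_iff)
  qed
  moreover have "support ` ?E \<subseteq> (\<Union>j\<le>k. {E. E \<subseteq> {..<m} \<and> card E = j})"
    by (auto simp: support_def length_filter_conv_card)
  ultimately have "card ?E \<le> card (\<Union>j\<le>k. {E. E \<subseteq> {..<m} \<and> card E = j})"
    by (intro card_inj_on_le) auto
  also have "\<dots> \<le> (\<Sum>j\<le>k. card {E. E \<subseteq> {..<m} \<and> card E = j})"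
    by (rule card_UN_le) simp
  also have "\<dots> = (\<Sum>j\<le>k. m choose j)"
    by (simp add: n_subsets)
  finally show ?thesis .
qed

lemma card_few_guess_errors:
  "card {bs. length bs = m \<and> length (filter id (guess_errors a b P h L bs)) \<le> k} \<le> (\<Sum>j\<le>k. m choose j)"
proof -
  let ?S = "{bs. length bs = m \<and> length (filter id (guess_errors a b P h L bs)) \<le> k}"
  have "inj_on (guess_errors a b P h L) ?S"
    by (rule inj_onI) (auto intro: guess_errors_eq_imp_eq)
  moreover have "guess_errors a b P h L ` ?S \<subseteq> {e. length e = m \<and> length (filter id e) \<le> k}"
    by (auto simp: length_guess_errors)
  ultimately have "card ?S \<le> card {e :: bool list. length e = m \<and> length (filter id e) \<le> k}"
    by (intro card_inj_on_le) (auto intro: finite_subset[OF _ finite_lists_length_eq[of UNIV m]])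
  also have "\<dots> \<le> (\<Sum>j\<le>k. m choose j)"
    by (rule card_bool_lists_few_true)
  finally show ?thesis .
qed

lemma two_pow_le_card_cover:
  fixes S :: "bool list \<Rightarrow> bool list set"
  assumes "\<And>w. finite (S w)" and "\<And>w. length w = B \<Longrightarrow> card (S w) \<le> V"
    and "\<And>bs. length bs = m \<Longrightarrow> \<exists>w. length w = B \<and> bs \<in> S w"
  shows "2 ^ m \<le> 2 ^ B * V"
proof -
  define W where "W = {w :: bool list. length w = B}"
  have "finite W"
    using finite_lists_length_eq[of "UNIV :: bool set" B] by (simp add: W_def)
  have "2 ^ m = card {bs :: bool list. length bs = m}"
    using card_lists_length_eq[of "UNIV :: bool set" m] by simp
  also have "\<dots> \<le> card (\<Union>w\<in>W. S w)"
    using assms(1,3) \<open>finite W\<close> unfolding W_def by (intro card_mono) auto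
  also have "\<dots> \<le> (\<Sum>w\<in>W. card (S w))"
    by (rule card_UN_le) fact
  also have "\<dots> \<le> (\<Sum>w\<in>W. V)"
    using assms(2) unfolding W_def by (intro sum_mono) auto
  also have "\<dots> = 2 ^ B * V"
    using card_lists_length_eq[of "UNIV :: bool set" B] by (simp add: W_def)
  finally show ?thesis .
qed

lemma two_pow_le_of_guess_error_cover:
  fixes Q :: "bool list \<Rightarrow> 'a list \<Rightarrow> nat list \<times> nat"
  assumes "\<And>bs. length bs = m \<Longrightarrow> \<exists>w. length w = B \<and> length (filter id (guess_errors a b (Q w) h L bs)) \<le> k"
  shows "2 ^ m \<le> 2 ^ B * (\<Sum>j\<le>k. m choose j)"
  using card_few_guess_errors assms finite_lists_length_eq[of "UNIV :: bool set" m]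
  by (intro two_pow_le_card_cover[where S = "\<lambda>w. {bs. length bs = m \<and> length (filter id (guess_errors a b (Q w) h L bs)) \<le> k}"]) auto

lemma powr_entropy_le_binomial_term:
  fixes x :: real and m j :: nat
  assumes "0 < x" "x \<le> 1/2" "real j \<le> x * m" "j \<le> m"
  shows "x powr (x * m) * (1 - x) powr ((1 - x) * m) \<le> x ^ j * (1 - x) ^ (m - j)"
proof -
  have "0 < 1 - x" "ln x \<le> ln (1 - x)"
    using assms(1,2) by auto
  have "x * m * ln x + (1 - x) * m * ln (1 - x) \<le> j * ln x + (m - j) * ln (1 - x)"
  proof -
    have "(x * m - j) * (ln x - ln (1 - x)) \<le> 0"
      using assms(3) \<open>ln x \<le> ln (1 - x)\<close> by (intro mult_nonneg_nonpos) auto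
    then show ?thesis
      using assms(4) by (simp add: of_nat_diff algebra_simps)
  qed
  then have "exp (x * m * ln x + (1 - x) * m * ln (1 - x)) \<le> exp (j * ln x + (m - j) * ln (1 - x))"
    by simp
  then show ?thesis
    using assms(1) \<open>0 < 1 - x\<close>
    by (simp add: powr_def exp_add exp_of_nat_mult mult.commute)
qed

lemma binomial_tail_mult_powr_entropy_le_1:
  fixes x :: real and m k :: nat
  assumes "0 < x" "x \<le> 1/2" "real k \<le> x * m"
  shows "(\<Sum>j\<le>k. real (m choose j)) * (x powr (x * m) * (1 - x) powr ((1 - x) * m)) \<le> 1"
proof -
  have "k \<le> m"
    using assms mult_left_le_one_le[of "real m" x] by linarith
  have "(\<Sum>j\<le>k. real (m choose j)) * (x powr (x * m) * (1 - x) powr ((1 - x) * m))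
      \<le> (\<Sum>j\<le>k. real (m choose j) * (x ^ j * (1 - x) ^ (m - j)))"
    unfolding sum_distrib_right using assms \<open>k \<le> m\<close>
    by (intro sum_mono mult_left_mono powr_entropy_le_binomial_term) auto
  also have "\<dots> \<le> (\<Sum>j\<le>m. real (m choose j) * (x ^ j * (1 - x) ^ (m - j)))"
    using \<open>k \<le> m\<close> assms(1,2) by (intro sum_mono2) auto
  also have "\<dots> = (x + (1 - x)) ^ m"
    unfolding binomial_ring[of x "1 - x" m] by (simp add: mult.assoc)
  finally show ?thesis
    by simp
qed

lemma binomial_tail_log_le_entropy:
  fixes x :: real and m k :: nat
  assumes "0 < x" "x \<le> 1/2" "real k \<le> x * m"
  shows "log 2 (\<Sum>j\<le>k. real (m choose j)) \<le> - real m * (x * log 2 x + (1 - x) * log 2 (1 - x))"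
proof -
  define Q where "Q = x powr (x * m) * (1 - x) powr ((1 - x) * m)"
  define S where "S = (\<Sum>j\<le>k. real (m choose j))"
  have "0 < S"
    unfolding S_def by (intro sum_pos2[of _ 0]) auto
  have "0 < Q"
    using assms(1,2) by (simp add: Q_def)
  have "log 2 S + log 2 Q = log 2 (S * Q)"
    using \<open>0 < S\<close> \<open>0 < Q\<close> by (simp add: log_mult)
  also have "\<dots> \<le> log 2 1"
    using \<open>0 < S\<close> \<open>0 < Q\<close> binomial_tail_mult_powr_entropy_le_1[OF assms]
    by (intro log_mono) (simp_all add: S_def Q_def)
  finally have "log 2 S + log 2 Q \<le> 0"
    by simp
  moreover have "log 2 Q = real m * (x * log 2 x + (1 - x) * log 2 (1 - x))"
    using assms(1,2) by (simp add: Q_def log_mult log_powr algebra_simps)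
  ultimately show ?thesis
    unfolding S_def by linarith
qed

lemma entropy_le_of_two_pow_le_binomial_tail:
  fixes x :: real and m k B :: nat
  assumes "0 < x" "x \<le> 1/2" "real k \<le> x * m" "2 ^ m \<le> 2 ^ B * (\<Sum>j\<le>k. m choose j)"
  shows "real m * (1 + x * log 2 x + (1 - x) * log 2 (1 - x)) \<le> B"
proof -
  have "0 < (\<Sum>j\<le>k. real (m choose j))"
    by (intro sum_pos2[of _ 0]) auto
  have "(2::real) ^ m \<le> 2 ^ B * (\<Sum>j\<le>k. real (m choose j))"
    using assms(4) by (metis (mono_tags) of_nat_le_iff of_nat_mult of_nat_numeral of_nat_power of_nat_sum)
  then have "log 2 (2 ^ m) \<le> log 2 (2 ^ B * (\<Sum>j\<le>k. real (m choose j)))"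
    by (intro log_mono) auto
  also have "\<dots> = B + log 2 (\<Sum>j\<le>k. real (m choose j))"
    using \<open>0 < (\<Sum>j\<le>k. real (m choose j))\<close> by (simp add: log_mult log_nat_power)
  finally show ?thesis
    using binomial_tail_log_le_entropy[OF assms(1-3)] by (simp add: log_nat_power algebra_simps)
qed

definition tape_of :: "bool list \<Rightarrow> nat \<Rightarrow> bool" where
  "tape_of w i \<longleftrightarrow> i < length w \<and> w ! i"

lemma alg_cost_eq_run_tape_prefix:
  assumes "advice_determines A \<phi> \<sigma> b" "b \<le> B"
  shows "alg_cost A \<phi> L \<sigma> = run (A (tape_of (map \<phi> [0..<B]))) [] \<sigma> L"
proof -
  have "\<forall>i<b. tape_of (map \<phi> [0..<B]) i = \<phi> i"
    using assms(2) by (simp add: tape_of_def)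
  then have "\<forall>i<length \<sigma>. A (tape_of (map \<phi> [0..<B])) (take (Suc i) \<sigma>) = A \<phi> (take (Suc i) \<sigma>)"
    using assms(1) unfolding advice_determines_def by blast
  then show ?thesis
    unfolding alg_cost_def by (intro run_cong) simp
qed

lemma advice_bits_ge_of_competitive_on_blocks:
  fixes \<gamma> :: real and A :: "(nat \<Rightarrow> bool) \<Rightarrow> 'a list \<Rightarrow> nat list \<times> nat"
  assumes "a \<noteq> b" "1 < \<gamma>" "\<gamma> \<le> 15/14"
    and competitive: "\<And>bs. length bs = m \<Longrightarrow>
      real (alg_cost A (adv (block_seq a b bs)) [a, b] (block_seq a b bs)) \<le> \<gamma> * OPT [a, b] (block_seq a b bs)"
    and determined: "\<And>bs. length bs = m \<Longrightarrow>
      \<exists>b'\<le>B. advice_determines A (adv (block_seq a b bs)) (block_seq a b bs) b'"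
  shows "real m * (1 + (7*\<gamma> - 7) * log 2 (7*\<gamma> - 7) + (8 - 7*\<gamma>) * log 2 (8 - 7*\<gamma>)) \<le> B"
proof -
  define x where "x = 7*\<gamma> - 7"
  define k where "k = nat \<lfloor>x * m\<rfloor>"
  have x: "0 < x" "x \<le> 1/2"
    using assms(2,3) by (auto simp: x_def)
  have "\<exists>w. length w = B \<and> length (filter id (guess_errors a b (A (tape_of w)) [] [a, b] bs)) \<le> k"
    if "length bs = m" for bs
  proof -
    define \<sigma> where "\<sigma> = block_seq a b bs"
    define w where "w = map (adv \<sigma>) [0..<B]"
    define e where "e = length (filter id (guess_errors a b (A (tape_of w)) [] [a, b] bs))"
    have "7 * m + e \<le> run (A (tape_of w)) [] \<sigma> [a, b]"
      using run_block_seq_ge[OF assms(1), where L = "[a, b]" and P = "A (tape_of w)" and h = "[]" and bs = bs] that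
      by (simp add: \<sigma>_def e_def)
    then have "real (7 * m + e) \<le> run (A (tape_of w)) [] \<sigma> [a, b]"
      by (simp only: of_nat_le_iff)
    also have "\<dots> = alg_cost A (adv \<sigma>) [a, b] \<sigma>"
      using determined[OF that] alg_cost_eq_run_tape_prefix by (fastforce simp: \<sigma>_def w_def)
    also have "\<dots> \<le> \<gamma> * OPT [a, b] \<sigma>"
      using competitive[OF that] by (simp add: \<sigma>_def)
    also have "\<dots> \<le> \<gamma> * (7 * m)"
      using OPT_block_seq_le[OF assms(1), of bs] that assms(2) by (simp add: \<sigma>_def)
    finally have "e \<le> k"
      unfolding k_def x_def by (intro le_nat_floor) (simp add: algebra_simps)
    then show ?thesis
      unfolding e_def by (intro exI[of _ w]) (simp add: w_def)
  qed
  then have "2 ^ m \<le> 2 ^ B * (\<Sum>j\<le>k. m choose j)"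
    by (rule two_pow_le_of_guess_error_cover)
  moreover have "real k \<le> x * m"
    using x by (simp add: k_def)
  ultimately show ?thesis
    using entropy_le_of_two_pow_le_binomial_tail[OF x] by (simp add: x_def algebra_simps)
qed

theorem theorem2:
  fixes \<gamma> :: real and L :: "'a list"
    and A :: "(nat \<Rightarrow> bool) \<Rightarrow> 'a list \<Rightarrow> nat list \<times> nat"
    and adv :: "'a list \<Rightarrow> nat \<Rightarrow> bool" and n :: nat
  assumes "1 < \<gamma>" and "\<gamma> \<le> 15/14"
    and "distinct L" and "length L = 2"
    and "\<forall>\<sigma>. set \<sigma> \<subseteq> set L \<longrightarrow> real (alg_cost A (adv \<sigma>) L \<sigma>) \<le> \<gamma> * real (OPT L \<sigma>)"
    and "5 dvd n"
  shows "\<exists>\<sigma>. length \<sigma> = n \<and> set \<sigma> \<subseteq> set L \<and>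
           (\<forall>b. advice_determines A (adv \<sigma>) \<sigma> b \<longrightarrow>
              real b \<ge> real n / 5 * (1 + (7*\<gamma> - 7) * log 2 (7*\<gamma> - 7)
                                        + (8 - 7*\<gamma>) * log 2 (8 - 7*\<gamma>)))"
proof (rule ccontr)
  define bound where "bound = real n / 5 * (1 + (7*\<gamma> - 7) * log 2 (7*\<gamma> - 7) + (8 - 7*\<gamma>) * log 2 (8 - 7*\<gamma>))"
  assume "\<not> ?thesis"
  then have short: "\<exists>b'. advice_determines A (adv \<sigma>) \<sigma> b' \<and> real b' < bound"
    if "length \<sigma> = n" "set \<sigma> \<subseteq> set L" for \<sigma>
    using that by (auto simp: bound_def not_le)
  obtain a b where L: "L = [a, b]" and "a \<noteq> b"
    using assms(3,4) by (auto simp: length_Suc_conv numeral_2_eq_2)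
  obtain m where n: "n = 5 * m"
    using assms(6) by blast
  have blocks: "length (block_seq a b bs) = n" "set (block_seq a b bs) \<subseteq> set L" if "length bs = m" for bs
    using that set_block_seq[of a b bs] by (simp_all add: n L length_block_seq)
  define B where "B = nat \<lceil>bound\<rceil> - 1"
  have "0 < bound"
    using short[OF blocks[of "replicate m False"]] by fastforce
  then have "real B < bound" and below_bound: "\<And>b'. real b' < bound \<Longrightarrow> b' \<le> B"
    unfolding B_def by linarith+
  have "\<exists>b'\<le>B. advice_determines A (adv (block_seq a b bs)) (block_seq a b bs) b'" if "length bs = m" for bs
    using short[OF blocks[OF that]] below_bound by blast
  then have "real m * (1 + (7*\<gamma> - 7) * log 2 (7*\<gamma> - 7) + (8 - 7*\<gamma>) * log 2 (8 - 7*\<gamma>)) \<le> B"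
    using assms(5) set_block_seq[of a b] unfolding L
    by (intro advice_bits_ge_of_competitive_on_blocks[where A = A and adv = adv, OF \<open>a \<noteq> b\<close> assms(1,2)]) auto
  then show False
    using \<open>real B < bound\<close> by (simp add: bound_def n)
qed

end
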